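(* Let $\mathbb{F}$ be a field of characteristic $2$, $\mathbb{F}'\subseteq\mathbb{F}$ a subfield, and $h$ a positive integer. Let $S\subseteq\mathbb{F}$ be a set with $|S|=n$ that is $2h$-wise independent over $\mathbb{F}'$. Let $r$ be a positive integer such that $\ell=\frac{n}{r+1}$ is an integer, and index the elements of $S$ as $S=\{\alpha_{i,s}\}_{i\in[\ell],s\in[r+1]}$. Then for every ${\bf e}\in[r+1]^\ell$ the multi-set $T(S,{\bf e})=\{\alpha_{i,s}+\alpha_{i,{\bf e}(i)}\}_{i\in[\ell],\,s\in[r+1]\setminus\{{\bf e}(i)\}}$ is $h$-wise independent over $\mathbb{F}'$.
   Context: A multi-set $T\subseteq\mathbb{F}$ is $t$-wise independent over a subfield $\mathbb{F}'$ if every sub-multi-set of $T$ of size at most $t$ is linearly independent over $\mathbb{F}'$. *)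

theory Defs
  imports Main
begin

definition is_subfield :: "'a::field set \<Rightarrow> bool" where
  "is_subfield K \<longleftrightarrow> 0 \<in> K \<and> 1 \<in> K \<and>
     (\<forall>x\<in>K. \<forall>y\<in>K. x + y \<in> K \<and> x * y \<in> K) \<and>
     (\<forall>x\<in>K. - x \<in> K) \<and> (\<forall>x\<in>K. x \<noteq> 0 \<longrightarrow> inverse x \<in> K)"

definition lin_indep_over :: "'a::field set \<Rightarrow> ('i \<Rightarrow> 'a) \<Rightarrow> 'i set \<Rightarrow> bool" where
  "lin_indep_over K v J \<longleftrightarrow>
     (\<forall>c. (\<forall>j\<in>J. c j \<in> K) \<longrightarrow> (\<Sum>j\<in>J. c j * v j) = 0 \<longrightarrow> (\<forall>j\<in>J. c j = 0))"

text \<open>The multi-set given by the family v indexed by I is t-wise independent over K: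
  every sub-multi-set (sub-family) of size at most t is linearly independent over K.\<close>
definition twise_indep :: "'a::field set \<Rightarrow> nat \<Rightarrow> ('i \<Rightarrow> 'a) \<Rightarrow> 'i set \<Rightarrow> bool" where
  "twise_indep K t v I \<longleftrightarrow>
     (\<forall>J. J \<subseteq> I \<and> finite J \<and> card J \<le> t \<longrightarrow> lin_indep_over K v J)"

end

theory Submission
  imports Defs
begin

text \<open>Write f(i,s) = (i, e(i)). A relation sum c(j) (alpha(j) + alpha(f(j))) = 0 over a set J of
  size at most h is a relation among the at most 2h original elements indexed by J \<union> f(J).
  Since f(J) is disjoint from J, the coefficient of alpha(j) for j \<in> J is just c(j), so 2h-wise
  independence forces all c(j) to vanish. Only injectivity of the indexing is needed: the
  characteristic and the size conditions are unused (in characteristic 2 the sums are the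
  differences alpha(j) - alpha(f(j)) that the paper is really after).\<close>

lemma sum_mem_subfield:
  assumes "is_subfield K" "\<forall>x\<in>A. g x \<in> K"
  shows "sum g A \<in> K"
proof (cases "finite A")
  case True
  then show ?thesis using assms(2)
    by (induction A rule: finite_induct) (use assms(1) in \<open>simp_all add: is_subfield_def\<close>)
next
  case False
  then show ?thesis using assms(1) by (simp add: is_subfield_def)
qed

lemma lin_indep_over_reindex:
  assumes "inj_on a J" "lin_indep_over K id (a ` J)"
  shows "lin_indep_over K a J"
  unfolding lin_indep_over_def
proof (intro allI impI)
  fix c assume cK: "\<forall>j\<in>J. c j \<in> K" and rel: "(\<Sum>j\<in>J. c j * a j) = 0"
  define c' where "c' = (\<lambda>x. c (the_inv_into J a x))"
  have c'_a: "c' (a j) = c j" if "j \<in> J" for j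
    using the_inv_into_f_f[OF assms(1) that] by (simp add: c'_def)
  have "(\<Sum>x\<in>a ` J. c' x * id x) = (\<Sum>j\<in>J. c' (a j) * a j)"
    by (simp add: sum.reindex[OF assms(1)])
  also have "\<dots> = 0"
    using rel by (simp add: c'_a cong: sum.cong)
  finally have "(\<Sum>x\<in>a ` J. c' x * id x) = 0" .
  moreover have "\<forall>x\<in>a ` J. c' x \<in> K"
    using cK by (simp add: c'_a)
  ultimately have "\<forall>x\<in>a ` J. c' x = 0"
    using assms(2) unfolding lin_indep_over_def by blast
  then show "\<forall>j\<in>J. c j = 0"
    by (simp add: c'_a)
qed

lemma twise_indep_reindex:
  assumes "inj_on a G" "a ` G \<subseteq> S" "twise_indep K t id S"
  shows "twise_indep K t a G"
  unfolding twise_indep_def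
proof (intro allI impI)
  fix J assume J: "J \<subseteq> G \<and> finite J \<and> card J \<le> t"
  then have inj: "inj_on a J" using assms(1) inj_on_subset by blast
  have "a ` J \<subseteq> S" "finite (a ` J)" "card (a ` J) \<le> t"
    using J assms(2) card_image[OF inj] by auto
  then have "lin_indep_over K id (a ` J)"
    using assms(3) unfolding twise_indep_def by blast
  then show "lin_indep_over K a J" by (rule lin_indep_over_reindex[OF inj])
qed

lemma lin_indep_over_add_image:
  assumes "is_subfield K" "finite J" "J \<inter> f ` J = {}"
    and indep: "lin_indep_over K v (J \<union> f ` J)"
  shows "lin_indep_over K (\<lambda>j. v j + v (f j)) J"
  unfolding lin_indep_over_def
proof (intro allI impI)
  fix c assume cK: "\<forall>j\<in>J. c j \<in> K" and rel: "(\<Sum>j\<in>J. c j * (v j + v (f j))) = 0"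
  define d where "d = (\<lambda>p. if p \<in> J then c p else sum c {j\<in>J. f j = p})"
  have dK: "\<forall>p\<in>J \<union> f ` J. d p \<in> K"
    using cK by (auto simp: d_def intro: sum_mem_subfield[OF assms(1)])
  have image_part: "(\<Sum>j\<in>J. c j * v (f j)) = (\<Sum>p\<in>f ` J. d p * v p)"
  proof -
    have "(\<Sum>j\<in>J. c j * v (f j)) = (\<Sum>p\<in>f ` J. \<Sum>j\<in>{j\<in>J. f j = p}. c j * v (f j))"
      by (rule sum.group[OF assms(2) finite_imageI[OF assms(2)] subset_refl, symmetric])
    also have "\<dots> = (\<Sum>p\<in>f ` J. d p * v p)"
      using assms(3) by (intro sum.cong) (auto simp: d_def sum_distrib_right)
    finally show ?thesis .
  qed
  have "(\<Sum>p\<in>J \<union> f ` J. d p * v p) = (\<Sum>p\<in>J. d p * v p) + (\<Sum>p\<in>f ` J. d p * v p)"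
    using assms(2,3) by (simp add: sum.union_disjoint)
  also have "\<dots> = (\<Sum>j\<in>J. c j * (v j + v (f j)))"
    by (simp add: image_part d_def distrib_left sum.distrib)
  finally have "(\<Sum>p\<in>J \<union> f ` J. d p * v p) = 0" using rel by simp
  then have "\<forall>p\<in>J \<union> f ` J. d p = 0"
    using indep dK unfolding lin_indep_over_def by blast
  then show "\<forall>j\<in>J. c j = 0" unfolding d_def by (metis UnI1)
qed

lemma twise_indep_add_image:
  assumes "is_subfield K" "twise_indep K (2 * t) v G"
    and "I \<subseteq> G" "f ` I \<subseteq> G" "I \<inter> f ` I = {}"
  shows "twise_indep K t (\<lambda>j. v j + v (f j)) I"
  unfolding twise_indep_def
proof (intro allI impI)
  fix J assume J: "J \<subseteq> I \<and> finite J \<and> card J \<le> t"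
  have "card (J \<union> f ` J) \<le> card J + card (f ` J)" by (rule card_Un_le)
  also have "\<dots> \<le> 2 * t" using J card_image_le[of J f] by linarith
  finally have "card (J \<union> f ` J) \<le> 2 * t" .
  moreover have "J \<union> f ` J \<subseteq> G" "finite (J \<union> f ` J)" using J assms(3,4) by auto
  ultimately have "lin_indep_over K v (J \<union> f ` J)"
    using assms(2) unfolding twise_indep_def by blast
  moreover have "J \<inter> f ` J = {}" using J assms(5) by blast
  ultimately show "lin_indep_over K (\<lambda>j. v j + v (f j)) J"
    using J lin_indep_over_add_image[OF assms(1)] by blast
qed

theorem lemma11:
  fixes K :: "'a::field set" and S :: "'a set" and h n r l :: nat
    and \<alpha> :: "nat \<Rightarrow> nat \<Rightarrow> 'a" and e :: "nat \<Rightarrow> nat"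
  assumes "CHAR('a) = 2"
    and "is_subfield K"
    and "h > 0"
    and "finite S" and "card S = n"
    and "twise_indep K (2 * h) id S"
    and "r > 0"
    and "n = l * (r + 1)"
    and "bij_betw (\<lambda>(i, s). \<alpha> i s) ({0..<l} \<times> {0..<r+1}) S"
    and "\<forall>i<l. e i < r + 1"
  shows "twise_indep K h (\<lambda>(i, s). \<alpha> i s + \<alpha> i (e i))
           {(i, s). i < l \<and> s < r + 1 \<and> s \<noteq> e i}"
proof -
  define a where "a = (\<lambda>(i, s). \<alpha> i s)"
  define f where "f = (\<lambda>(i::nat, s::nat). (i, e i))"
  define G where "G = {0..<l} \<times> {0..<r+1}"
  define I where "I = {(i, s). i < l \<and> s < r + 1 \<and> s \<noteq> e i}"
  have "twise_indep K (2 * h) a G"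
    using assms(6,9) twise_indep_reindex[of a G S K "2 * h"]
    unfolding a_def G_def bij_betw_def by blast
  moreover have "I \<subseteq> G" "f ` I \<subseteq> G" "I \<inter> f ` I = {}"
    using assms(10) by (auto simp: I_def G_def f_def)
  ultimately have "twise_indep K h (\<lambda>j. a j + a (f j)) I"
    by (rule twise_indep_add_image[OF assms(2)])
  moreover have "(\<lambda>j. a j + a (f j)) = (\<lambda>(i, s). \<alpha> i s + \<alpha> i (e i))"
    by (auto simp: a_def f_def)
  ultimately show ?thesis by (simp add: I_def)
qed

end
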